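(* Let $\mathbb{N}\subseteq\mathbb{R}^n$ be a linear subspace. There exists a constant $C(\mathbb{N})<1$ such that for all ${\bm a},{\bm b}\in\mathbb{R}^n$ and ${\bm r}\in\mathbb{N}$ with $\operatorname{sgn}({\bm a})=\operatorname{sgn}({\bm b})$ (componentwise, with $\operatorname{sgn}(0)=0$) and ${\bm b}\in\mathbb{N}^\perp$, we have $|\langle{\bm r},{\bm a}\rangle|\le C(\mathbb{N})\|{\bm r}\|_2\|{\bm a}\|_2$. *)

theory Defs
  imports "HOL-Analysis.Analysis"
begin

end

theory Submission
  imports Defs
begin

text \<open>Let K be the union of the closed sign cones of all b orthogonal to N. There are only
  finitely many sign patterns, so K is a closed cone. It meets N only in 0: if a \<in> N has
  the signs of b, then a \<bullet> b = 0 is a sum of nonnegative products of coordinates, which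
  forces a = 0. By compactness of its unit vectors, a closed cone meeting a subspace only in 0
  makes an angle with it that is bounded away from 0.\<close>

lemma compact_sphere_disjoint_subspace_inner_bound:
  fixes N A :: "'a::euclidean_space set"
  assumes N: "subspace N" and "compact A" and A: "A \<subseteq> sphere 0 1" "A \<inter> N = {}"
  shows "\<exists>C<1. \<forall>r\<in>N \<inter> sphere 0 1. \<forall>a\<in>A. \<bar>r \<bullet> a\<bar> \<le> C"
proof (cases "(N \<inter> sphere 0 1) \<times> A = {}")
  case True
  then show ?thesis by (intro exI[of _ 0]) auto
next
  case False
  have "compact ((N \<inter> sphere 0 1) \<times> A)"
    using compact_Int_closed[OF compact_sphere closed_subspace[OF N]] \<open>compact A\<close>
    by (simp add: Int_commute compact_Times)
  moreover have "continuous_on ((N \<inter> sphere 0 1) \<times> A) (\<lambda>(r, a). \<bar>r \<bullet> a\<bar>)"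
    unfolding case_prod_beta' by (intro continuous_intros)
  ultimately obtain p where p: "p \<in> (N \<inter> sphere 0 1) \<times> A"
    and max: "\<forall>q\<in>(N \<inter> sphere 0 1) \<times> A. (\<lambda>(r, a). \<bar>r \<bullet> a\<bar>) q \<le> (\<lambda>(r, a). \<bar>r \<bullet> a\<bar>) p"
    using continuous_attains_sup[OF _ False] by blast
  obtain r0 a0 where "p = (r0, a0)" by (cases p)
  with p max A have r0: "r0 \<in> N" "norm r0 = 1" and a0: "a0 \<in> A" "norm a0 = 1"
    and max': "\<forall>r\<in>N \<inter> sphere 0 1. \<forall>a\<in>A. \<bar>r \<bullet> a\<bar> \<le> \<bar>r0 \<bullet> a0\<bar>"
    by auto
  have "\<bar>r0 \<bullet> a0\<bar> \<le> 1"
    using Cauchy_Schwarz_ineq2[of r0 a0] r0 a0 by simp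
  moreover have "\<bar>r0 \<bullet> a0\<bar> \<noteq> 1"
  proof
    assume "\<bar>r0 \<bullet> a0\<bar> = 1"
    then have "a0 = r0 \<or> a0 = - r0"
      using norm_cauchy_schwarz_abs_eq[of r0 a0] r0 a0 by auto
    then have "a0 \<in> N" using r0 N by (auto simp: subspace_neg)
    then show False using a0 A by auto
  qed
  ultimately show ?thesis using max' by (intro exI[of _ "\<bar>r0 \<bullet> a0\<bar>"]) simp
qed

lemma closed_cone_subspace_inner_bound:
  fixes N K :: "'a::euclidean_space set"
  assumes N: "subspace N" and "closed K" and K: "cone K" "K \<inter> N \<subseteq> {0}"
  shows "\<exists>C<1. \<forall>r\<in>N. \<forall>a\<in>K. \<bar>r \<bullet> a\<bar> \<le> C * norm r * norm a"
proof -
  have "compact (K \<inter> sphere 0 1)"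
    using \<open>closed K\<close> by (simp add: closed_Int_compact)
  moreover have "K \<inter> sphere 0 1 \<inter> N = {}" using K by auto
  ultimately obtain C where "C < 1"
    and C: "\<forall>r\<in>N \<inter> sphere 0 1. \<forall>a\<in>K \<inter> sphere 0 1. \<bar>r \<bullet> a\<bar> \<le> C"
    using compact_sphere_disjoint_subspace_inner_bound[OF N] by blast
  have "\<bar>r \<bullet> a\<bar> \<le> C * norm r * norm a" if "r \<in> N" "a \<in> K" for r a
  proof (cases "r = 0 \<or> a = 0")
    case True
    then show ?thesis by auto
  next
    case False
    then have "r /\<^sub>R norm r \<in> N \<inter> sphere 0 1" "a /\<^sub>R norm a \<in> K \<inter> sphere 0 1"
      using that N K(1) by (auto simp: subspace_scale mem_cone)
    then have le: "\<bar>(r /\<^sub>R norm r) \<bullet> (a /\<^sub>R norm a)\<bar> \<le> C" using C by blast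
    have "r \<bullet> a = (norm r * norm a) * ((r /\<^sub>R norm r) \<bullet> (a /\<^sub>R norm a))"
      using False by (simp add: field_simps)
    also have "\<bar>\<dots>\<bar> \<le> (norm r * norm a) * C"
      unfolding abs_mult abs_norm_cancel by (rule mult_left_mono[OF le]) simp
    finally show ?thesis by (simp add: mult_ac)
  qed
  then show ?thesis using \<open>C < 1\<close> by blast
qed

text \<open>The closure of the set of vectors with the same sign pattern as b.\<close>

definition sign_cone :: "real ^ 'n \<Rightarrow> (real ^ 'n) set" where
  "sign_cone b = {a. \<forall>i. 0 \<le> a $ i * b $ i \<and> (b $ i = 0 \<longrightarrow> a $ i = 0)}"

lemma closed_sign_cone: "closed (sign_cone b)"
  unfolding sign_cone_def
  by (intro closed_Collect_all closed_Collect_conj closed_Collect_le closed_Collect_imp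
      closed_Collect_eq) (simp_all add: continuous_on_mult_right continuous_on_component)

lemma cone_sign_cone: "cone (sign_cone b)"
  by (auto simp: cone_def sign_cone_def mult.assoc)

lemma mem_sign_cone_if_sgn_eq:
  assumes "\<And>i. sgn (a $ i) = sgn (b $ i)"
  shows "a \<in> sign_cone b"
  unfolding sign_cone_def
proof (intro CollectI allI conjI impI)
  fix i
  have "0 \<le> sgn (a $ i * b $ i)"
    using assms[of i] by (simp add: sgn_mult)
  then show "0 \<le> a $ i * b $ i" by simp
  show "a $ i = 0" if "b $ i = 0" using assms[of i] that by (simp add: sgn_0_0)
qed

lemma sign_cone_sgn: "sign_cone (\<chi> i. sgn (b $ i)) = sign_cone b"
  by (auto simp: sign_cone_def zero_le_mult_iff sgn_0_0)

lemma finite_vec_Collect_mem: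
  assumes "finite S"
  shows "finite {v :: 'a ^ 'n. \<forall>i. v $ i \<in> S}"
proof -
  have "{v :: 'a ^ 'n. \<forall>i. v $ i \<in> S} \<subseteq> vec_lambda ` PiE UNIV (\<lambda>_. S)"
    by (auto intro!: image_eqI[where x = "vec_nth _"])
  moreover have "finite (vec_lambda ` PiE UNIV (\<lambda>_. S) :: ('a ^ 'n) set)"
    using assms by (intro finite_imageI finite_PiE) auto
  ultimately show ?thesis by (rule finite_subset)
qed

lemma finite_range_sign_cone: "finite (range (sign_cone :: real ^ 'n \<Rightarrow> _))"
proof -
  have "range (sign_cone :: real ^ 'n \<Rightarrow> _) \<subseteq> sign_cone ` {v. \<forall>i. v $ i \<in> {-1, 0, 1}}"
  proof
    fix K assume "K \<in> range (sign_cone :: real ^ 'n \<Rightarrow> _)"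
    then obtain b :: "real ^ 'n" where "K = sign_cone (\<chi> i. sgn (b $ i))"
      by (auto simp: sign_cone_sgn)
    then show "K \<in> sign_cone ` {v. \<forall>i. v $ i \<in> {-1, 0, 1}}"
      by (auto simp: sgn_real_def)
  qed
  then show ?thesis by (rule finite_subset) (intro finite_imageI finite_vec_Collect_mem; simp)
qed

lemma sign_cone_inner_eq_0:
  assumes "a \<in> sign_cone b" and "a \<bullet> b = 0"
  shows "a = 0"
proof -
  have "\<And>i. 0 \<le> a $ i * b $ i" using assms(1) by (simp add: sign_cone_def)
  moreover have "(\<Sum>i\<in>UNIV. a $ i * b $ i) = 0" using assms(2) by (simp add: inner_vec_def)
  ultimately have "\<forall>i. a $ i * b $ i = 0"
    using sum_nonneg_eq_0_iff[of UNIV "\<lambda>i. a $ i * b $ i"] by simp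
  then show ?thesis using assms(1) by (auto simp: sign_cone_def vec_eq_iff)
qed

theorem mainTheorem6:
  fixes N :: "(real ^ 'n) set"
  assumes "subspace N"
  shows "\<exists>C::real. C < 1 \<and>
    (\<forall>a b r. r \<in> N \<longrightarrow> b \<in> orthogonal_comp N \<longrightarrow>
       (\<forall>i. sgn (a $ i) = sgn (b $ i)) \<longrightarrow>
       \<bar>r \<bullet> a\<bar> \<le> C * norm r * norm a)"
proof -
  define K where "K = \<Union> (sign_cone ` orthogonal_comp N)"
  have "closed K"
    unfolding K_def
    using finite_subset[OF image_mono[OF subset_UNIV] finite_range_sign_cone] closed_sign_cone
    by blast
  moreover have "cone K"
    unfolding K_def by (intro cone_Union[rule_format]) (auto simp: cone_sign_cone)
  moreover have "K \<inter> N \<subseteq> {0}"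
  proof
    fix a assume "a \<in> K \<inter> N"
    then obtain b where "b \<in> orthogonal_comp N" "a \<in> sign_cone b" "a \<in> N"
      unfolding K_def by blast
    then show "a \<in> {0}"
      using sign_cone_inner_eq_0 by (auto simp: orthogonal_comp_def orthogonal_def inner_commute)
  qed
  ultimately obtain C where "C < 1" and C: "\<forall>r\<in>N. \<forall>a\<in>K. \<bar>r \<bullet> a\<bar> \<le> C * norm r * norm a"
    using closed_cone_subspace_inner_bound[OF assms] by blast
  have "a \<in> K" if "b \<in> orthogonal_comp N" "\<forall>i. sgn (a $ i) = sgn (b $ i)" for a b
    unfolding K_def using that mem_sign_cone_if_sgn_eq by blast
  then show ?thesis using \<open>C < 1\<close> C by blast
qed

end
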